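(* Let $A\twoheadrightarrow A'$ be a surjection of finite local $k$-algebras whose kernel $J$ satisfies $J^2=0$. Let $I'\subseteq S_{A'}$ and $I\subseteq S_A$ be graded submodules such that (1) $I'_2\subseteq q^\perp\otimes A'$; (2) $(S_A/I)_2$ is a free $A$-module; (3) the image of $I_2$ in $(S_{A'})_2$ is $I'_2$. Then there exists $g\in\mathrm{GL}_n(A)$ with $g\equiv\mathrm{Id}_n \pmod J$ and $(g\circ I)_2\subseteq q^\perp\otimes A$.
   Context: Let $k$ be a field of characteristic zero, $S=k[x_1,\dots,x_n]$, $T=k[y_1,\dots,y_n]$, with $S$ acting on $T$ by differentiation; for $f\in T_d$, $f^\perp=\{g\in S:g\circ f=0\}$. Fix a full rank quadratic form $q\in T_2$. For a $k$-algebra $A$, $S_A=S\otimes_kA=A[x_1,\dots,x_n]$, and $q^\perp\otimes A\subseteq S_A$ denotes the extension of $q^\perp$ (in degree 2, the $A$-submodule of $(S_A)_2$ annihilating $q$). $\mathrm{GL}_n(A)$ acts on $S_A$ by $A$-linear substitution of the variables $x_1,\dots,x_n$, and $g\circ I$ denotes the image of $I$. *)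

theory Defs
  imports "HOL-Analysis.Analysis" "HOL-Library.Poly_Mapping"
begin

definition is_ideal :: "'a::comm_ring_1 set \<Rightarrow> bool" where
  "is_ideal I \<longleftrightarrow> 0 \<in> I \<and> (\<forall>x\<in>I. \<forall>y\<in>I. x + y \<in> I) \<and> (\<forall>r. \<forall>x\<in>I. r * x \<in> I)"

definition maximal_ideal :: "'a::comm_ring_1 set \<Rightarrow> bool" where
  "maximal_ideal M \<longleftrightarrow> is_ideal M \<and> M \<noteq> UNIV \<and>
     (\<forall>N. is_ideal N \<and> M \<subseteq> N \<and> N \<noteq> UNIV \<longrightarrow> N = M)"

definition local_ring :: "'a::comm_ring_1 itself \<Rightarrow> bool" where
  "local_ring _ \<longleftrightarrow> (\<exists>!M::'a set. maximal_ideal M)"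

definition ring_hom :: "('a::comm_ring_1 \<Rightarrow> 'b::comm_ring_1) \<Rightarrow> bool" where
  "ring_hom f \<longleftrightarrow> f 1 = 1 \<and> (\<forall>x y. f (x + y) = f x + f y) \<and> (\<forall>x y. f (x * y) = f x * f y)"

text \<open>A k-algebra A is given by its structure map iota : k -> A (a ring homomorphism).
  It is finite if it is finite-dimensional as a k-vector space.\<close>
definition finite_algebra :: "('k::field \<Rightarrow> 'a::comm_ring_1) \<Rightarrow> bool" where
  "finite_algebra \<iota> \<longleftrightarrow> ring_hom \<iota> \<and>
     (\<exists>F::'a set. finite F \<and> (\<forall>a. \<exists>c. a = (\<Sum>x\<in>F. \<iota> (c x) * x)))"

definition finite_local_algebra :: "('k::field \<Rightarrow> 'a::comm_ring_1) \<Rightarrow> bool" where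
  "finite_local_algebra \<iota> \<longleftrightarrow> finite_algebra \<iota> \<and> local_ring TYPE('a)"

type_synonym ('n, 'a) mpoly = "('n \<Rightarrow>\<^sub>0 nat) \<Rightarrow>\<^sub>0 'a"

definition mdeg :: "('n \<Rightarrow>\<^sub>0 nat) \<Rightarrow> nat" where
  "mdeg \<alpha> = (\<Sum>i\<in>Poly_Mapping.keys \<alpha>. Poly_Mapping.lookup \<alpha> i)"

definition const :: "'a::comm_ring_1 \<Rightarrow> ('n, 'a) mpoly" where
  "const c = Poly_Mapping.single 0 c"

definition var :: "'n \<Rightarrow> ('n, 'a::comm_ring_1) mpoly" where
  "var i = Poly_Mapping.single (Poly_Mapping.single i 1) 1"

definition smul :: "'a::comm_ring_1 \<Rightarrow> ('n, 'a) mpoly \<Rightarrow> ('n, 'a) mpoly" where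
  "smul a f = const a * f"

definition homog :: "nat \<Rightarrow> ('n, 'a::zero) mpoly \<Rightarrow> bool" where
  "homog d f \<longleftrightarrow> (\<forall>\<alpha>\<in>Poly_Mapping.keys f. mdeg \<alpha> = d)"

definition homog_part :: "nat \<Rightarrow> ('n, 'a::comm_ring_1) mpoly \<Rightarrow> ('n, 'a) mpoly" where
  "homog_part d f = (\<Sum>\<alpha>\<in>Poly_Mapping.keys f. if mdeg \<alpha> = d then Poly_Mapping.single \<alpha> (Poly_Mapping.lookup f \<alpha>) else 0)"

definition graded_submodule :: "('n, 'a::comm_ring_1) mpoly set \<Rightarrow> bool" where
  "graded_submodule I \<longleftrightarrow> 0 \<in> I \<and> (\<forall>f\<in>I. \<forall>g\<in>I. f + g \<in> I) \<and>
     (\<forall>a. \<forall>f\<in>I. smul a f \<in> I) \<and> (\<forall>f\<in>I. \<forall>d. homog_part d f \<in> I)"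

definition deg_part :: "nat \<Rightarrow> ('n, 'a::comm_ring_1) mpoly set \<Rightarrow> ('n, 'a) mpoly set" where
  "deg_part d I = {f\<in>I. homog d f}"

text \<open>(S_A / I)_d is a free A-module: there is a family B in (S_A)_d whose images
  in (S_A)_d / I_d form a basis.\<close>
definition free_quotient_deg :: "nat \<Rightarrow> ('n, 'a::comm_ring_1) mpoly set \<Rightarrow> bool" where
  "free_quotient_deg d I \<longleftrightarrow> (\<exists>B. B \<subseteq> {f. homog d f} \<and>
     (\<forall>f. homog d f \<longrightarrow> (\<exists>F c. finite F \<and> F \<subseteq> B \<and> f - (\<Sum>b\<in>F. smul (c b) b) \<in> deg_part d I)) \<and>
     (\<forall>F c. finite F \<and> F \<subseteq> B \<and> (\<Sum>b\<in>F. smul (c b) b) \<in> deg_part d I \<longrightarrow> (\<forall>b\<in>F. c b = 0)))"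

definition pmap :: "('a::comm_ring_1 \<Rightarrow> 'b::comm_ring_1) \<Rightarrow> ('n, 'a) mpoly \<Rightarrow> ('n, 'b) mpoly" where
  "pmap \<pi> f = Poly_Mapping.map \<pi> f"

text \<open>Action of g in GL_n(A) by A-linear substitution x_i |-> sum_j g_ij x_j.\<close>
definition subst :: "'a::comm_ring_1^'n::finite^'n \<Rightarrow> ('n, 'a) mpoly \<Rightarrow> ('n, 'a) mpoly" where
  "subst g f = (\<Sum>\<alpha>\<in>Poly_Mapping.keys f. const (Poly_Mapping.lookup f \<alpha>) *
      (\<Prod>i\<in>Poly_Mapping.keys \<alpha>. (\<Sum>j\<in>UNIV. const (g $ i $ j) * var j) ^ Poly_Mapping.lookup \<alpha> i))"

text \<open>Apolarity: S_A acting on T (polynomials over k, coefficients pushed into A via iota)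
  by differentiation: x^alpha o y^beta = beta!/(beta-alpha)! y^(beta-alpha) if alpha <= beta, else 0.\<close>
definition mon_le :: "('n \<Rightarrow>\<^sub>0 nat) \<Rightarrow> ('n \<Rightarrow>\<^sub>0 nat) \<Rightarrow> bool" where
  "mon_le \<alpha> \<beta> \<longleftrightarrow> (\<forall>i. Poly_Mapping.lookup \<alpha> i \<le> Poly_Mapping.lookup \<beta> i)"

definition diff_coeff :: "('n \<Rightarrow>\<^sub>0 nat) \<Rightarrow> ('n \<Rightarrow>\<^sub>0 nat) \<Rightarrow> nat" where
  "diff_coeff \<alpha> \<beta> = (\<Prod>i\<in>Poly_Mapping.keys \<beta>. fact (Poly_Mapping.lookup \<beta> i) div fact (Poly_Mapping.lookup \<beta> i - Poly_Mapping.lookup \<alpha> i))"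

definition apolar :: "('k::field \<Rightarrow> 'a::comm_ring_1) \<Rightarrow> ('n, 'a) mpoly \<Rightarrow> ('n, 'k) mpoly \<Rightarrow> ('n, 'a) mpoly" where
  "apolar \<iota> f t = (\<Sum>\<alpha>\<in>Poly_Mapping.keys f. \<Sum>\<beta>\<in>Poly_Mapping.keys t.
      if mon_le \<alpha> \<beta> then Poly_Mapping.single (\<beta> - \<alpha>)
         (Poly_Mapping.lookup f \<alpha> * \<iota> (Poly_Mapping.lookup t \<beta>) * of_nat (diff_coeff \<alpha> \<beta>)) else 0)"

text \<open>q^perp tensor A in degree 2: forms in (S_A)_2 annihilating q.\<close>
definition qperp2 :: "('k::field \<Rightarrow> 'a::comm_ring_1) \<Rightarrow> ('n, 'k) mpoly \<Rightarrow> ('n, 'a) mpoly set" where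
  "qperp2 \<iota> q = {f. homog 2 f \<and> apolar \<iota> f q = 0}"

text \<open>q in T_2 has full rank: its (Hessian) matrix (d_i d_j q) is invertible.\<close>
definition full_rank_quadric :: "('n::finite, 'k::field) mpoly \<Rightarrow> bool" where
  "full_rank_quadric q \<longleftrightarrow> homog 2 q \<and>
     invertible (\<chi> i j. Poly_Mapping.lookup (apolar id (var i * var j) q) 0 :: 'k^'n^'n)"

end

theory Submission
  imports Defs
begin

text \<open>Contracting a quadratic form against \<open>q\<close> is an \<open>A\<close>-linear functional \<open>c\<close> on
  \<open>(S_A)\<^sub>2\<close> whose kernel is \<open>q\<^sup>\<perp> \<otimes> A\<close>, and its Gram matrix \<open>C\<close> is invertible because \<open>q\<close> has full
  rank. Since \<open>(S_A/I)\<^sub>2\<close> is free, there are \<open>r\<^sub>\<alpha> \<in> I\<^sub>2\<close>, one per quadratic monomial, such that every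
  \<open>f \<in> I\<^sub>2\<close> equals \<open>\<Sum> f\<^sub>\<alpha> r\<^sub>\<alpha>\<close>; so on \<open>I\<^sub>2\<close> the functional \<open>c\<close> is given by the numbers \<open>N\<^sub>\<alpha> = c(r\<^sub>\<alpha>)\<close>,
  which lie in \<open>J\<close> because \<open>I'\<^sub>2 \<subseteq> q\<^sup>\<perp> \<otimes> A'\<close>. Let \<open>M\<close> be the symmetric matrix of the \<open>N\<^sub>\<alpha>\<close> and
  \<open>g = 1 - \<onehalf> M C\<^sup>-\<^sup>1\<close>. As \<open>J\<^sup>2 = 0\<close>, the quadratic term of \<open>g C g\<^sup>T\<close> vanishes and \<open>g C g\<^sup>T = C - M\<close>;
  hence \<open>c(g \<circ> f) = c(f) - \<Sum> f\<^sub>\<alpha> N\<^sub>\<alpha> = 0\<close> for \<open>f \<in> I\<^sub>2\<close>.\<close>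

lemma ring_hom_add: "ring_hom f \<Longrightarrow> f (x + y) = f x + f y"
  and ring_hom_mult: "ring_hom f \<Longrightarrow> f (x * y) = f x * f y"
  and ring_hom_one: "ring_hom f \<Longrightarrow> f 1 = 1"
  unfolding ring_hom_def by blast+

lemma ring_hom_zero: "ring_hom f \<Longrightarrow> f 0 = 0"
  by (metis add_cancel_right_right ring_hom_add)

lemma ring_hom_sum: "ring_hom f \<Longrightarrow> f (sum g A) = (\<Sum>x\<in>A. f (g x))"
  by (induction A rule: infinite_finite_induct) (simp_all add: ring_hom_zero ring_hom_add)

lemma ring_hom_of_nat: "ring_hom f \<Longrightarrow> f (of_nat n) = of_nat n"
  by (induction n) (simp_all add: ring_hom_zero ring_hom_add ring_hom_one)

lemma lookup_pmap: "ring_hom f \<Longrightarrow> Poly_Mapping.lookup (pmap f p) \<alpha> = f (Poly_Mapping.lookup p \<alpha>)"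
  by (simp add: pmap_def Poly_Mapping.map.rep_eq when_def ring_hom_zero)

lemma pmap_single_one: "ring_hom f \<Longrightarrow> pmap f (Poly_Mapping.single \<alpha> 1) = Poly_Mapping.single \<alpha> 1"
  by (simp add: pmap_def ring_hom_one ring_hom_zero)

lemma lookup_const_mult: "Poly_Mapping.lookup (const a * p) \<alpha> = a * Poly_Mapping.lookup p \<alpha>"
  by (simp add: const_def Poly_Mapping.map.rep_eq when_def flip: mult_map_scale_conv_mult)

lemma const_mult_const: "const a * const b = (const (a * b) :: ('n, 'a::comm_ring_1) mpoly)"
  by (simp add: const_def mult_single)

lemma single_eq_zero_iff: "Poly_Mapping.single k v = 0 \<longleftrightarrow> v = 0"
  by (metis lookup_single_eq lookup_zero single_zero)

lemma single_sum: "Poly_Mapping.single k (sum f A) = (\<Sum>x\<in>A. Poly_Mapping.single k (f x))"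
  by (induction A rule: infinite_finite_induct) (simp_all add: single_add)

lemma var_mult_var:
  "var i * var j = (Poly_Mapping.single (Poly_Mapping.single i 1 + Poly_Mapping.single j 1) 1 :: ('n, 'a::comm_ring_1) mpoly)"
  by (simp add: var_def mult_single)

lemma mdeg_eq_sum_UNIV: "mdeg (\<alpha>::'n::finite \<Rightarrow>\<^sub>0 nat) = (\<Sum>i\<in>UNIV. Poly_Mapping.lookup \<alpha> i)"
  unfolding mdeg_def by (rule sum.mono_neutral_left) (auto simp: in_keys_iff)

lemma mdeg_add: "mdeg ((\<alpha>::'n::finite \<Rightarrow>\<^sub>0 nat) + \<beta>) = mdeg \<alpha> + mdeg \<beta>"
  by (simp add: mdeg_eq_sum_UNIV lookup_add sum.distrib)

lemma mdeg_single: "mdeg (Poly_Mapping.single (i::'n::finite) n) = n"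
  by (simp add: mdeg_eq_sum_UNIV lookup_single when_def)

lemma mdeg_zero_iff: "mdeg (\<alpha>::'n::finite \<Rightarrow>\<^sub>0 nat) = 0 \<longleftrightarrow> \<alpha> = 0"
  by (auto simp: mdeg_eq_sum_UNIV poly_mapping_eq_iff fun_eq_iff)

lemma mdeg_Suc_split:
  assumes "mdeg (\<alpha>::'n::finite \<Rightarrow>\<^sub>0 nat) = Suc m"
  obtains i \<gamma> where "\<alpha> = \<gamma> + Poly_Mapping.single i 1" and "mdeg \<gamma> = m"
proof -
  obtain i where i: "Poly_Mapping.lookup \<alpha> i \<noteq> 0"
    using assms mdeg_zero_iff by (metis nat.simps(3) poly_mapping_eqI lookup_zero)
  define \<gamma> where "\<gamma> = \<alpha> - Poly_Mapping.single i 1"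
  have "\<alpha> = \<gamma> + Poly_Mapping.single i 1"
    using i by (intro poly_mapping_eqI) (auto simp: \<gamma>_def lookup_add lookup_minus lookup_single when_def)
  moreover from this have "mdeg \<gamma> = m"
    using assms by (simp add: mdeg_add mdeg_single)
  ultimately show thesis by (rule that)
qed

lemma mdeg_eq_2:
  assumes "mdeg (\<alpha>::'n::finite \<Rightarrow>\<^sub>0 nat) = 2"
  obtains i j where "\<alpha> = Poly_Mapping.single i 1 + Poly_Mapping.single j 1"
  using assms by (metis Suc_1 mdeg_Suc_split mdeg_zero_iff add_0 One_nat_def)

lemma mon_le_same_mdeg:
  assumes "mon_le \<alpha> \<beta>" and "mdeg (\<alpha>::'n::finite \<Rightarrow>\<^sub>0 nat) = mdeg \<beta>"
  shows "\<alpha> = \<beta>"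
proof (rule poly_mapping_eqI, rule ccontr)
  fix k assume "Poly_Mapping.lookup \<alpha> k \<noteq> Poly_Mapping.lookup \<beta> k"
  with assms(1) have "Poly_Mapping.lookup \<alpha> k < Poly_Mapping.lookup \<beta> k"
    unfolding mon_le_def by (simp add: order_le_neq_trans)
  then have "(\<Sum>i\<in>UNIV. Poly_Mapping.lookup \<alpha> i) < (\<Sum>i\<in>UNIV. Poly_Mapping.lookup \<beta> i)"
    using assms(1) unfolding mon_le_def by (intro sum_strict_mono_ex1) auto
  with assms(2) show False by (simp add: mdeg_eq_sum_UNIV)
qed

lemma homog_zero [simp]: "homog d 0"
  by (simp add: homog_def)

lemma homog_add: "homog d f \<Longrightarrow> homog d g \<Longrightarrow> homog d (f + g)"
  unfolding homog_def by (meson Un_iff keys_add subsetD)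

lemma homog_sum: "(\<And>x. x \<in> A \<Longrightarrow> homog d (f x)) \<Longrightarrow> homog d (sum f A)"
  by (induction A rule: infinite_finite_induct) (simp_all add: homog_add)

lemma keys_const_mult: "Poly_Mapping.keys (const a * f) \<subseteq> Poly_Mapping.keys f"
  by (auto simp: in_keys_iff lookup_const_mult)

lemma homog_const_mult: "homog d f \<Longrightarrow> homog d (const a * f)"
  unfolding homog_def using keys_const_mult by blast

lemma homog_mult:
  "homog d (f::('n::finite, 'a::comm_ring_1) mpoly) \<Longrightarrow> homog e g \<Longrightarrow> homog (d + e) (f * g)"
  unfolding homog_def using keys_mult[of f g] by (force simp: mdeg_add)

lemma homog_one: "homog 0 (1::('n::finite, 'a::comm_ring_1) mpoly)"
  by (simp add: homog_def mdeg_zero_iff)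

lemma homog_power:
  "homog d (f::('n::finite, 'a::comm_ring_1) mpoly) \<Longrightarrow> homog (d * m) (f ^ m)"
  by (induction m) (simp_all add: homog_one homog_mult)

lemma homog_prod_power:
  assumes "\<And>i. homog 1 (L i :: ('n::finite, 'a::comm_ring_1) mpoly)"
  shows "homog (\<Sum>i\<in>K. e i) (\<Prod>i\<in>K. L i ^ e i)"
proof (induction K rule: infinite_finite_induct)
  case (insert i K)
  then show ?case
    using homog_mult[OF homog_power[OF assms[of i], of "e i"]] by simp
qed (simp_all add: homog_one)

lemma homog_single: "homog (mdeg \<alpha>) (Poly_Mapping.single \<alpha> c)"
  by (simp add: homog_def)

lemma lookup_homog_part:
  "Poly_Mapping.lookup (homog_part d f) \<alpha> = (if mdeg \<alpha> = d then Poly_Mapping.lookup f \<alpha> else 0)"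
proof -
  have "Poly_Mapping.lookup (homog_part d f) \<alpha> = (\<Sum>\<beta>\<in>Poly_Mapping.keys f.
      if \<beta> = \<alpha> then (if mdeg \<alpha> = d then Poly_Mapping.lookup f \<alpha> else 0) else 0)"
    unfolding homog_part_def lookup_sum by (rule sum.cong) (auto simp: lookup_single when_def)
  then show ?thesis by (simp add: in_keys_iff)
qed

lemma keys_homog_part: "Poly_Mapping.keys (homog_part d f) = {\<alpha> \<in> Poly_Mapping.keys f. mdeg \<alpha> = d}"
  by (auto simp: in_keys_iff lookup_homog_part split: if_splits)

lemma homog_homog_part: "homog d (homog_part d f)"
  by (simp add: homog_def keys_homog_part)

interpretation smul: module "smul :: 'a::comm_ring_1 \<Rightarrow> ('n, 'a) mpoly \<Rightarrow> ('n, 'a) mpoly"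
  by standard (simp_all add: smul_def const_def distrib_left distrib_right single_add mult_single
      flip: mult.assoc)

lemma homog_smul: "homog d f \<Longrightarrow> homog d (smul a f)"
  unfolding smul_def by (rule homog_const_mult)

lemma smul_single_one: "smul a (Poly_Mapping.single \<alpha> 1) = Poly_Mapping.single \<alpha> a"
  by (simp add: smul_def const_def mult_single)

lemma mpoly_eq_sum_smul_single:
  "p = (\<Sum>\<alpha>\<in>Poly_Mapping.keys p. smul (Poly_Mapping.lookup p \<alpha>) (Poly_Mapping.single \<alpha> 1))"
  by (rule poly_mapping_eqI) (simp add: smul_single_one lookup_sum lookup_single when_def in_keys_iff)

lemma subspace_deg_part: "graded_submodule I \<Longrightarrow> smul.subspace (deg_part d I)"
  by (auto simp: smul.subspace_def graded_submodule_def deg_part_def intro: homog_add homog_smul)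

lemma free_quotient_deg_complement:
  fixes I :: "('n, 'a::comm_ring_1) mpoly set"
  assumes "free_quotient_deg d I"
  obtains B where "\<And>f. homog d f \<Longrightarrow> \<exists>s\<in>smul.span B. f - s \<in> deg_part d I"
    and "\<And>s. s \<in> smul.span B \<Longrightarrow> s \<in> deg_part d I \<Longrightarrow> s = 0"
proof -
  from assms obtain B where "B \<subseteq> {f. homog d f}" and
    B_span: "\<forall>f. homog d f \<longrightarrow> (\<exists>t c. finite t \<and> t \<subseteq> B \<and> f - (\<Sum>b\<in>t. smul (c b) b) \<in> deg_part d I)"
    and B_indep: "\<forall>t c. finite t \<and> t \<subseteq> B \<and> (\<Sum>b\<in>t. smul (c b) b) \<in> deg_part d I \<longrightarrow> (\<forall>b\<in>t. c b = 0)"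
    unfolding free_quotient_deg_def by (elim exE conjE)
  show thesis
  proof
    fix f :: "('n, 'a) mpoly" assume "homog d f"
    then obtain t c where "finite t" "t \<subseteq> B" and "f - (\<Sum>b\<in>t. smul (c b) b) \<in> deg_part d I"
      using B_span by blast
    then show "\<exists>s\<in>smul.span B. f - s \<in> deg_part d I"
      unfolding smul.span_explicit by blast
  next
    fix s assume "s \<in> smul.span B" and s_I: "s \<in> deg_part d I"
    then obtain t c where "finite t" "t \<subseteq> B" and s: "s = (\<Sum>b\<in>t. smul (c b) b)"
      unfolding smul.span_explicit by blast
    then have "\<forall>b\<in>t. c b = 0"
      using B_indep s_I by simp
    then show "s = 0"
      by (simp add: s)
  qed
qed

lemma free_quotient_deg_reproducing:
  fixes I :: "('n, 'a::comm_ring_1) mpoly set"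
  assumes I: "graded_submodule I" and free: "free_quotient_deg d I"
  obtains r where "\<And>\<alpha>. mdeg \<alpha> = d \<Longrightarrow> r \<alpha> \<in> deg_part d I"
    and "\<And>f. f \<in> deg_part d I \<Longrightarrow> f = (\<Sum>\<alpha>\<in>Poly_Mapping.keys f. smul (Poly_Mapping.lookup f \<alpha>) (r \<alpha>))"
proof -
  obtain B where B_span: "\<And>f. homog d f \<Longrightarrow> \<exists>s\<in>smul.span B. f - s \<in> deg_part d I"
    and span_inter: "\<And>s. s \<in> smul.span B \<Longrightarrow> s \<in> deg_part d I \<Longrightarrow> s = 0"
    using free_quotient_deg_complement[OF free] by blast
  define s where "s \<alpha> = (SOME s. s \<in> smul.span B \<and> Poly_Mapping.single \<alpha> 1 - s \<in> deg_part d I)" for \<alpha>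
  have s: "s \<alpha> \<in> smul.span B \<and> Poly_Mapping.single \<alpha> 1 - s \<alpha> \<in> deg_part d I" if "mdeg \<alpha> = d" for \<alpha>
  proof -
    have "homog d (Poly_Mapping.single \<alpha> (1::'a))"
      using homog_single[of \<alpha> 1] that by simp
    then have "\<exists>s. s \<in> smul.span B \<and> Poly_Mapping.single \<alpha> 1 - s \<in> deg_part d I"
      using B_span by blast
    then show ?thesis
      unfolding s_def by (rule someI_ex)
  qed
  show thesis
  proof
    show "Poly_Mapping.single \<alpha> 1 - s \<alpha> \<in> deg_part d I" if "mdeg \<alpha> = d" for \<alpha>
      using s that by blast
    fix f assume f: "f \<in> deg_part d I"
    let ?K = "Poly_Mapping.keys f" and ?c = "Poly_Mapping.lookup f"
    have deg: "mdeg \<alpha> = d" if "\<alpha> \<in> ?K" for \<alpha>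
      using f that by (simp add: deg_part_def homog_def)
    have diff: "f - (\<Sum>\<alpha>\<in>?K. smul (?c \<alpha>) (Poly_Mapping.single \<alpha> 1 - s \<alpha>)) = (\<Sum>\<alpha>\<in>?K. smul (?c \<alpha>) (s \<alpha>))"
      by (subst (1) mpoly_eq_sum_smul_single)
        (simp add: smul.scale_right_diff_distrib sum_subtractf)
    have "(\<Sum>\<alpha>\<in>?K. smul (?c \<alpha>) (s \<alpha>)) \<in> smul.span B"
      using s deg by (intro smul.span_sum smul.span_scale) blast
    moreover have "(\<Sum>\<alpha>\<in>?K. smul (?c \<alpha>) (Poly_Mapping.single \<alpha> 1 - s \<alpha>)) \<in> deg_part d I"
      using subspace_deg_part[OF I] s deg by (intro smul.subspace_sum smul.subspace_scale) auto
    then have "(\<Sum>\<alpha>\<in>?K. smul (?c \<alpha>) (s \<alpha>)) \<in> deg_part d I"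
      unfolding diff[symmetric] by (rule smul.subspace_diff[OF subspace_deg_part[OF I] f])
    ultimately have "(\<Sum>\<alpha>\<in>?K. smul (?c \<alpha>) (s \<alpha>)) = 0"
      by (rule span_inter)
    with diff show "f = (\<Sum>\<alpha>\<in>?K. smul (?c \<alpha>) (Poly_Mapping.single \<alpha> 1 - s \<alpha>))"
      by simp
  qed
qed

definition contraction :: "('k::field \<Rightarrow> 'a::comm_ring_1) \<Rightarrow> ('n, 'k) mpoly \<Rightarrow> ('n, 'a) mpoly \<Rightarrow> 'a" where
  "contraction \<iota> q h = (\<Sum>\<alpha>\<in>Poly_Mapping.keys q.
      Poly_Mapping.lookup h \<alpha> * \<iota> (Poly_Mapping.lookup q \<alpha>) * of_nat (diff_coeff \<alpha> \<alpha>))"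

lemma apolar_eq_single_contraction:
  fixes h :: "('n::finite, 'a::comm_ring_1) mpoly" and q :: "('n, 'k::field) mpoly"
  assumes h: "homog d h" and q: "homog d q"
  shows "apolar \<iota> h q = Poly_Mapping.single 0 (contraction \<iota> q h)"
proof -
  let ?t = "\<lambda>\<alpha>. Poly_Mapping.lookup h \<alpha> * \<iota> (Poly_Mapping.lookup q \<alpha>) * of_nat (diff_coeff \<alpha> \<alpha>)"
  have mon_le_iff: "mon_le \<alpha> \<beta> \<longleftrightarrow> \<alpha> = \<beta>"
    if "\<alpha> \<in> Poly_Mapping.keys h" "\<beta> \<in> Poly_Mapping.keys q" for \<alpha> \<beta>
    using mon_le_same_mdeg[of \<alpha> \<beta>] that h q unfolding homog_def mon_le_def by auto
  have "apolar \<iota> h q = (\<Sum>\<alpha>\<in>Poly_Mapping.keys h. \<Sum>\<beta>\<in>Poly_Mapping.keys q.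
      if \<alpha> = \<beta> then Poly_Mapping.single 0 (?t \<alpha>) else 0)"
    unfolding apolar_def by (intro sum.cong refl) (simp add: mon_le_iff)
  also have "\<dots> = (\<Sum>\<alpha>\<in>Poly_Mapping.keys h \<inter> Poly_Mapping.keys q. Poly_Mapping.single 0 (?t \<alpha>))"
    by (simp add: sum.inter_restrict if_distrib cong: if_cong)
  also have "\<dots> = Poly_Mapping.single 0 (\<Sum>\<alpha>\<in>Poly_Mapping.keys h \<inter> Poly_Mapping.keys q. ?t \<alpha>)"
    by (simp add: single_sum)
  also have "(\<Sum>\<alpha>\<in>Poly_Mapping.keys h \<inter> Poly_Mapping.keys q. ?t \<alpha>) = contraction \<iota> q h"
    unfolding contraction_def by (rule sum.mono_neutral_left) (auto simp: in_keys_iff)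
  finally show ?thesis .
qed

lemma qperp2_iff:
  fixes q :: "('n::finite, 'k::field) mpoly"
  assumes "homog 2 q"
  shows "h \<in> qperp2 \<iota> q \<longleftrightarrow> homog 2 h \<and> contraction \<iota> q h = 0"
proof -
  have "homog 2 h \<Longrightarrow> apolar \<iota> h q = Poly_Mapping.single 0 (contraction \<iota> q h)"
    using apolar_eq_single_contraction assms by blast
  then show ?thesis
    by (auto simp: qperp2_def single_eq_zero_iff)
qed

lemma contraction_zero [simp]: "contraction \<iota> q 0 = 0"
  by (simp add: contraction_def)

lemma contraction_add: "contraction \<iota> q (f + g) = contraction \<iota> q f + contraction \<iota> q g"
  unfolding contraction_def by (simp add: lookup_add distrib_right sum.distrib)

lemma contraction_sum: "contraction \<iota> q (sum f A) = (\<Sum>x\<in>A. contraction \<iota> q (f x))"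
  by (induction A rule: infinite_finite_induct) (simp_all add: contraction_add)

lemma contraction_const_mult: "contraction \<iota> q (const a * f) = a * contraction \<iota> q f"
  unfolding contraction_def by (simp add: lookup_const_mult sum_distrib_left mult.assoc)

lemma contraction_smul: "contraction \<iota> q (smul a f) = a * contraction \<iota> q f"
  unfolding smul_def by (rule contraction_const_mult)

lemma contraction_expand:
  "contraction \<iota> q h = (\<Sum>\<alpha>\<in>Poly_Mapping.keys h. Poly_Mapping.lookup h \<alpha> * contraction \<iota> q (Poly_Mapping.single \<alpha> 1))"
  using arg_cong[OF mpoly_eq_sum_smul_single[of h], of "contraction \<iota> q"]
  by (simp add: contraction_sum contraction_smul)

lemma contraction_homog_part:
  assumes "homog d q"
  shows "contraction \<iota> q (homog_part d f) = contraction \<iota> q f"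
  using assms unfolding contraction_def homog_def by (intro sum.cong) (simp_all add: lookup_homog_part)

lemma contraction_homog_other_degree:
  assumes "homog d q" and "homog e h" and "e \<noteq> d"
  shows "contraction \<iota> q h = 0"
  using assms unfolding contraction_def homog_def by (intro sum.neutral) (auto simp: in_keys_iff)

lemma ring_hom_contraction:
  assumes "ring_hom \<pi>" and "\<And>c. \<pi> (\<iota> c) = \<iota>' c"
  shows "\<pi> (contraction \<iota> q h) = contraction \<iota>' q (pmap \<pi> h)"
  using assms unfolding contraction_def by (simp add: ring_hom_sum ring_hom_mult ring_hom_of_nat lookup_pmap)

definition lin_form :: "'a::comm_ring_1^'n::finite^'n \<Rightarrow> 'n \<Rightarrow> ('n, 'a) mpoly" where
  "lin_form g i = (\<Sum>j\<in>UNIV. const (g $ i $ j) * var j)"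

definition subst_monomial :: "'a::comm_ring_1^'n::finite^'n \<Rightarrow> ('n \<Rightarrow>\<^sub>0 nat) \<Rightarrow> ('n, 'a) mpoly" where
  "subst_monomial g \<alpha> = (\<Prod>i\<in>Poly_Mapping.keys \<alpha>. lin_form g i ^ Poly_Mapping.lookup \<alpha> i)"

lemma subst_eq_sum_subst_monomial:
  "subst g f = (\<Sum>\<alpha>\<in>Poly_Mapping.keys f. const (Poly_Mapping.lookup f \<alpha>) * subst_monomial g \<alpha>)"
  unfolding subst_def subst_monomial_def lin_form_def ..

lemma homog_subst_monomial: "homog (mdeg \<alpha>) (subst_monomial g \<alpha>)"
proof -
  have "homog 1 (lin_form g i)" for i
    unfolding lin_form_def
    by (intro homog_sum homog_const_mult) (simp add: homog_def var_def mdeg_single)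
  then show ?thesis
    unfolding subst_monomial_def mdeg_def by (rule homog_prod_power)
qed

lemma subst_monomial_quadratic:
  "subst_monomial g (Poly_Mapping.single i 1 + Poly_Mapping.single j 1) = lin_form g i * lin_form g j"
proof (cases "i = j")
  case True
  have "Poly_Mapping.single i 1 + Poly_Mapping.single i 1 = Poly_Mapping.single i (2::nat)"
    by (metis one_add_one single_add)
  then show ?thesis
    using True by (simp add: subst_monomial_def power2_eq_square)
next
  case False
  then have "Poly_Mapping.keys (Poly_Mapping.single i 1 + Poly_Mapping.single j (1::nat)) = {i, j}"
    by (auto simp: in_keys_iff lookup_add lookup_single when_def split: if_splits)
  with False show ?thesis
    by (simp add: subst_monomial_def lookup_add lookup_single)
qed

lemma contraction_subst:
  fixes q :: "('n::finite, 'k::field) mpoly"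
  assumes q: "homog d q"
    and degree_d: "\<And>\<alpha>. mdeg \<alpha> = d \<Longrightarrow>
      contraction \<iota> q (subst_monomial g \<alpha>) = contraction \<iota> q (Poly_Mapping.single \<alpha> 1) - N \<alpha>"
  shows "contraction \<iota> q (subst g f) = contraction \<iota> q f -
    (\<Sum>\<alpha>\<in>Poly_Mapping.keys (homog_part d f). Poly_Mapping.lookup (homog_part d f) \<alpha> * N \<alpha>)"
proof -
  have monomial: "contraction \<iota> q (subst_monomial g \<alpha>) =
      contraction \<iota> q (Poly_Mapping.single \<alpha> 1) - (if mdeg \<alpha> = d then N \<alpha> else 0)" for \<alpha>
    by (cases "mdeg \<alpha> = d") (simp_all add: degree_d
        contraction_homog_other_degree[OF q homog_subst_monomial]
        contraction_homog_other_degree[OF q homog_single])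
  have "contraction \<iota> q (subst g f) =
      (\<Sum>\<alpha>\<in>Poly_Mapping.keys f. Poly_Mapping.lookup f \<alpha> * contraction \<iota> q (subst_monomial g \<alpha>))"
    by (simp add: subst_eq_sum_subst_monomial contraction_sum contraction_const_mult)
  also have "\<dots> =
      (\<Sum>\<alpha>\<in>Poly_Mapping.keys f. Poly_Mapping.lookup f \<alpha> * contraction \<iota> q (Poly_Mapping.single \<alpha> 1)) -
      (\<Sum>\<alpha>\<in>Poly_Mapping.keys f. if mdeg \<alpha> = d then Poly_Mapping.lookup f \<alpha> * N \<alpha> else 0)"
    unfolding monomial right_diff_distrib sum_subtractf[symmetric] by (intro sum.cong) auto
  also have "\<dots> = contraction \<iota> q f -
      (\<Sum>\<alpha>\<in>Poly_Mapping.keys (homog_part d f). Poly_Mapping.lookup (homog_part d f) \<alpha> * N \<alpha>)"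
    by (simp add: contraction_expand[symmetric] keys_homog_part lookup_homog_part sum.inter_filter)
  finally show ?thesis .
qed

lemma matrix_add_rdistrib: "((A::'a::semiring_1^'n::finite^'m) + B) ** C = A ** C + B ** C"
  by (simp add: matrix_matrix_mult_def vec_eq_iff distrib_right sum.distrib)

lemma matrix_diff_ldistrib: "(A::'a::ring_1^'n::finite^'m) ** (B - C) = A ** B - A ** C"
  by (simp add: matrix_matrix_mult_def vec_eq_iff right_diff_distrib sum_subtractf)

lemma matrix_diff_rdistrib: "((A::'a::ring_1^'n::finite^'m) - B) ** C = A ** C - B ** C"
  by (simp add: matrix_matrix_mult_def vec_eq_iff left_diff_distrib sum_subtractf)

lemma transpose_add: "transpose (A + B) = transpose A + transpose B"
  by (simp add: transpose_def vec_eq_iff)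

lemma mat_matrix_mult_nth: "(mat c ** A) $ i $ j = c * A $ i $ j"
  by (simp add: matrix_matrix_mult_def mat_def if_distrib if_distribR cong: if_cong)

lemma matrix_mat_mult_nth: "(A ** mat c) $ i $ j = A $ i $ j * c"
  by (simp add: matrix_matrix_mult_def mat_def if_distrib if_distribR cong: if_cong)

lemma map_matrix_mult:
  "ring_hom f \<Longrightarrow> map_matrix f (A ** B) = map_matrix f A ** map_matrix f (B::'a::comm_ring_1^'n::finite^'n)"
  by (simp add: map_matrix_def matrix_matrix_mult_def vec_eq_iff ring_hom_sum ring_hom_mult)

lemma map_matrix_mat: "ring_hom f \<Longrightarrow> map_matrix f (mat 1) = mat 1"
  by (simp add: map_matrix_def mat_def vec_eq_iff ring_hom_one ring_hom_zero)

lemma ring_hom_vanishes_matrix_mult: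
  fixes A :: "'a::comm_ring_1^'n::finite^'n"
  assumes "ring_hom f" and "\<And>i j. f (A $ i $ j) = 0"
  shows "f ((X ** A ** Y) $ i $ j) = 0"
  using assms by (simp add: matrix_matrix_mult_def ring_hom_sum ring_hom_mult)

lemma matrix_mult_entrywise_annihilating:
  fixes A B :: "'a::comm_semiring_1^'n::finite^'n"
  assumes "\<And>i j k l. A $ i $ j * B $ k $ l = 0"
  shows "A ** X ** B = 0"
proof -
  have "A $ i $ l * X $ l $ k * B $ k $ j = 0" for i j k l
    by (metis assms mult.commute mult_zero_left mult.assoc)
  then show ?thesis by (simp add: matrix_matrix_mult_def vec_eq_iff sum_distrib_right)
qed

lemma invertible_mat_1_plus_square_zero:
  fixes E :: "'a::comm_ring_1^'n::finite^'n"
  assumes "E ** E = 0"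
  shows "invertible (mat 1 + E)"
proof -
  have "(mat 1 + E) ** (mat 1 - E) = mat 1" "(mat 1 - E) ** (mat 1 + E) = mat 1"
    using assms by (simp_all add: matrix_add_ldistrib matrix_add_rdistrib matrix_diff_ldistrib matrix_diff_rdistrib)
  then show ?thesis unfolding invertible_def by blast
qed

lemma congruence_by_unipotent_correction:
  fixes H M Hi :: "'a::comm_ring_1^'n::finite^'n"
  assumes Hi: "Hi ** H = mat 1" and H_sym: "transpose H = H" and M_sym: "transpose M = M"
    and M_square_zero: "\<And>i j k l. M $ i $ j * M $ k $ l = 0" and half: "c + c = 1"
  defines "g \<equiv> mat 1 + mat (- c) ** M ** Hi"
  shows "g ** H ** transpose g = H - M" and "invertible g"
proof -
  define E where "E = mat (- c) ** M ** Hi"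
  have EH: "E ** H = mat (- c) ** M"
    by (simp add: E_def Hi flip: matrix_mul_assoc)
  have HEt: "H ** transpose E = M ** mat (- c)"
    by (metis EH H_sym M_sym matrix_transpose_mul transpose_mat)
  have MXM: "M ** X ** M = 0" for X
    by (rule matrix_mult_entrywise_annihilating) (rule M_square_zero)
  have "transpose E = transpose Hi ** M ** mat (- c)"
    by (simp add: E_def M_sym matrix_transpose_mul matrix_mul_assoc)
  then have "E ** H ** transpose E = mat (- c) ** (M ** transpose Hi ** M) ** mat (- c)"
    by (simp add: EH matrix_mul_assoc)
  then have EHEt: "E ** H ** transpose E = 0"
    by (simp add: MXM)
  have "g ** H ** transpose g = H + E ** H + H ** transpose E + E ** H ** transpose E"
    by (simp add: g_def E_def[symmetric] transpose_add matrix_add_ldistrib matrix_add_rdistrib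
        matrix_mul_assoc)
  also have "\<dots> = H - M"
  proof -
    have "- c * m + m * - c = - m" for m :: 'a
      using half by (metis distrib_right minus_add_distrib minus_mult_left mult.commute mult_1_left)
    then have "mat (- c) ** M + M ** mat (- c) = - M"
      by (simp only: vec_eq_iff vector_add_component vector_uminus_component mat_matrix_mult_nth
          matrix_mat_mult_nth) simp
    then show ?thesis
      unfolding EHEt unfolding EH HEt by (simp add: add.assoc)
  qed
  finally show "g ** H ** transpose g = H - M" .
  have "E ** E = mat (- c) ** (M ** (Hi ** mat (- c)) ** M) ** Hi"
    by (simp add: E_def matrix_mul_assoc)
  then show "invertible g"
    unfolding g_def E_def[symmetric] by (simp add: MXM invertible_mat_1_plus_square_zero)
qed

definition contraction_matrix :: "('k::field \<Rightarrow> 'a::comm_ring_1) \<Rightarrow> ('n::finite, 'k) mpoly \<Rightarrow> 'a^'n^'n" where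
  "contraction_matrix \<iota> q = (\<chi> i j. contraction \<iota> q (var i * var j))"

lemma transpose_contraction_matrix: "transpose (contraction_matrix \<iota> q) = contraction_matrix \<iota> q"
  by (simp add: contraction_matrix_def transpose_def mult.commute)

lemma contraction_matrix_eq_map_matrix:
  "ring_hom \<iota> \<Longrightarrow> contraction_matrix \<iota> q = map_matrix \<iota> (contraction_matrix id q)"
  using ring_hom_contraction[of \<iota> id \<iota> q]
  by (simp add: contraction_matrix_def map_matrix_def var_mult_var pmap_single_one)

lemma hessian_eq_contraction_matrix:
  fixes q :: "('n::finite, 'k::field) mpoly"
  assumes "homog 2 q"
  shows "(\<chi> i j. Poly_Mapping.lookup (apolar id (var i * var j) q) 0) = contraction_matrix id q"
proof -
  have homog_var_mult: "homog 2 (var i * var j :: ('n, 'k) mpoly)" for i j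
    using homog_single[of "Poly_Mapping.single i 1 + Poly_Mapping.single j 1"]
    by (simp add: var_mult_var mdeg_add mdeg_single numeral_2_eq_2)
  have "Poly_Mapping.lookup (apolar id (var i * var j) q) 0 = contraction id q (var i * var j)" for i j
    using apolar_eq_single_contraction[OF homog_var_mult assms] by simp
  then show ?thesis
    by (simp add: contraction_matrix_def vec_eq_iff)
qed

lemma contraction_lin_form_mult:
  "contraction \<iota> q (lin_form g i * lin_form g j) = (g ** contraction_matrix \<iota> q ** transpose g) $ i $ j"
proof -
  have lin_mult: "lin_form g i * lin_form g j =
      (\<Sum>k\<in>UNIV. \<Sum>l\<in>UNIV. const (g $ i $ k * g $ j $ l) * (var k * var l))"
    unfolding lin_form_def sum_product
    by (intro sum.cong refl) (simp add: algebra_simps flip: const_mult_const)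
  have "contraction \<iota> q (lin_form g i * lin_form g j) =
      (\<Sum>k\<in>UNIV. \<Sum>l\<in>UNIV. g $ i $ k * contraction \<iota> q (var k * var l) * g $ j $ l)"
    unfolding lin_mult contraction_sum contraction_const_mult by (simp add: mult_ac)
  also have "\<dots> = (g ** contraction_matrix \<iota> q ** transpose g) $ i $ j"
    by (subst sum.swap) (simp add: matrix_matrix_mult_def transpose_def contraction_matrix_def sum_distrib_right)
  finally show ?thesis .
qed

lemma contraction_deg_part_coefficients:
  fixes I :: "('n, 'a::comm_ring_1) mpoly set"
  assumes I: "graded_submodule I" and free: "free_quotient_deg d I"
  obtains N where "\<And>\<alpha>. mdeg \<alpha> = d \<Longrightarrow> N \<alpha> \<in> contraction \<iota> q ` deg_part d I"
    and "\<And>f. f \<in> deg_part d I \<Longrightarrow> contraction \<iota> q f = (\<Sum>\<alpha>\<in>Poly_Mapping.keys f. Poly_Mapping.lookup f \<alpha> * N \<alpha>)"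
proof -
  obtain r where r_mem: "\<And>\<alpha>. mdeg \<alpha> = d \<Longrightarrow> r \<alpha> \<in> deg_part d I"
    and r_repr: "\<And>f. f \<in> deg_part d I \<Longrightarrow>
      f = (\<Sum>\<alpha>\<in>Poly_Mapping.keys f. smul (Poly_Mapping.lookup f \<alpha>) (r \<alpha>))"
    using free_quotient_deg_reproducing[OF I free] by blast
  show thesis
  proof
    show "contraction \<iota> q (r \<alpha>) \<in> contraction \<iota> q ` deg_part d I" if "mdeg \<alpha> = d" for \<alpha>
      using r_mem[OF that] by (rule imageI)
    show "contraction \<iota> q f = (\<Sum>\<alpha>\<in>Poly_Mapping.keys f. Poly_Mapping.lookup f \<alpha> * contraction \<iota> q (r \<alpha>))"
      if "f \<in> deg_part d I" for f
      using arg_cong[OF r_repr[OF that], of "contraction \<iota> q"]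
      by (simp add: contraction_sum contraction_smul)
  qed
qed

lemma subst_deg_part_subset_qperp2:
  fixes q :: "('n::finite, 'k::field) mpoly" and I :: "('n, 'a::comm_ring_1) mpoly set"
  assumes q: "homog 2 q" and I: "graded_submodule I"
    and N: "\<And>f. f \<in> deg_part 2 I \<Longrightarrow>
      contraction \<iota> q f = (\<Sum>\<alpha>\<in>Poly_Mapping.keys f. Poly_Mapping.lookup f \<alpha> * N \<alpha>)"
    and g: "g ** contraction_matrix \<iota> q ** transpose g =
      contraction_matrix \<iota> q - (\<chi> i j. N (Poly_Mapping.single i 1 + Poly_Mapping.single j 1))"
  shows "deg_part 2 (subst g ` I) \<subseteq> qperp2 \<iota> q"
proof
  have quadratic: "contraction \<iota> q (subst_monomial g \<alpha>) = contraction \<iota> q (Poly_Mapping.single \<alpha> 1) - N \<alpha>"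
    if \<alpha>2: "mdeg \<alpha> = 2" for \<alpha>
  proof -
    obtain i j where \<alpha>: "\<alpha> = Poly_Mapping.single i 1 + Poly_Mapping.single j 1"
      using mdeg_eq_2[OF \<alpha>2] .
    have "contraction \<iota> q (subst_monomial g \<alpha>) = (g ** contraction_matrix \<iota> q ** transpose g) $ i $ j"
      unfolding \<alpha> subst_monomial_quadratic by (rule contraction_lin_form_mult)
    also have "\<dots> = contraction_matrix \<iota> q $ i $ j - N \<alpha>"
      by (simp add: g \<alpha>)
    finally show ?thesis
      by (simp add: \<alpha> contraction_matrix_def var_mult_var)
  qed
  fix h assume "h \<in> deg_part 2 (subst g ` I)"
  then obtain f where f: "f \<in> I" and h: "h = subst g f" "homog 2 h"
    by (auto simp: deg_part_def)
  have f2: "homog_part 2 f \<in> deg_part 2 I"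
    using I f by (simp add: graded_submodule_def deg_part_def homog_homog_part)
  have "contraction \<iota> q h = contraction \<iota> q f - contraction \<iota> q (homog_part 2 f)"
    by (simp add: h contraction_subst[OF q quadratic] N[OF f2])
  with h q show "h \<in> qperp2 \<iota> q"
    by (simp add: qperp2_iff contraction_homog_part)
qed

lemma exists_unipotent_subst_into_qperp2:
  fixes q :: "('n::finite, 'k::field) mpoly" and \<iota> :: "'k \<Rightarrow> 'a::comm_ring_1"
    and \<pi> :: "'a \<Rightarrow> 'b::comm_ring_1" and I :: "('n, 'a) mpoly set" and c :: 'a
  assumes q: "homog 2 q" and I: "graded_submodule I" and free: "free_quotient_deg 2 I"
    and Hi: "Hi ** contraction_matrix \<iota> q = mat 1" and half: "c + c = 1"
    and \<pi>: "ring_hom \<pi>" and J2: "\<forall>x y. \<pi> x = 0 \<and> \<pi> y = 0 \<longrightarrow> x * y = 0"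
    and vanish: "\<And>f. f \<in> deg_part 2 I \<Longrightarrow> \<pi> (contraction \<iota> q f) = 0"
  shows "\<exists>g::'a^'n^'n. invertible g \<and> (\<forall>i j. \<pi> (g $ i $ j - mat 1 $ i $ j) = 0) \<and>
           deg_part 2 (subst g ` I) \<subseteq> qperp2 \<iota> q"
proof -
  obtain N where N_value: "\<And>\<alpha>. mdeg \<alpha> = 2 \<Longrightarrow> N \<alpha> \<in> contraction \<iota> q ` deg_part 2 I"
    and N_repr: "\<And>f. f \<in> deg_part 2 I \<Longrightarrow>
      contraction \<iota> q f = (\<Sum>\<alpha>\<in>Poly_Mapping.keys f. Poly_Mapping.lookup f \<alpha> * N \<alpha>)"
    using contraction_deg_part_coefficients[OF I free] by blast
  define M :: "'a^'n^'n" where "M = (\<chi> i j. N (Poly_Mapping.single i 1 + Poly_Mapping.single j 1))"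
  have \<pi>_M: "\<pi> (M $ i $ j) = 0" for i j
    using N_value[of "Poly_Mapping.single i 1 + Poly_Mapping.single j 1"] vanish
    by (auto simp: M_def mdeg_add mdeg_single)
  have M_sym: "transpose M = M"
    by (simp add: M_def transpose_def add.commute)
  have M_square_zero: "M $ i $ j * M $ k $ l = 0" for i j k l
    using J2 \<pi>_M by blast
  define g where "g = mat 1 + mat (- c) ** M ** Hi"
  have "g ** contraction_matrix \<iota> q ** transpose g = contraction_matrix \<iota> q - M"
    and "invertible g"
    using congruence_by_unipotent_correction[OF Hi transpose_contraction_matrix M_sym M_square_zero half]
    unfolding g_def by blast+
  moreover have "\<pi> (g $ i $ j - mat 1 $ i $ j) = 0" for i j
    using ring_hom_vanishes_matrix_mult[OF \<pi> \<pi>_M] by (simp add: g_def)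
  ultimately show ?thesis
    using subst_deg_part_subset_qperp2[OF q I N_repr] unfolding M_def by blast
qed

theorem theorem2p4:
  fixes q :: "('n::finite, 'k::field_char_0) mpoly"
    and \<iota> :: "'k \<Rightarrow> 'a::comm_ring_1" and \<iota>' :: "'k \<Rightarrow> 'b::comm_ring_1"
    and \<pi> :: "'a \<Rightarrow> 'b"
    and I :: "('n, 'a) mpoly set" and I' :: "('n, 'b) mpoly set"
  assumes q: "full_rank_quadric q"
    and A: "finite_local_algebra \<iota>" and A': "finite_local_algebra \<iota>'"
    and hom: "ring_hom \<pi>" and compat: "\<forall>c. \<pi> (\<iota> c) = \<iota>' c" and surj: "surj \<pi>"
    and J2: "\<forall>x y. \<pi> x = 0 \<and> \<pi> y = 0 \<longrightarrow> x * y = 0"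
    and I'gr: "graded_submodule I'" and Igr: "graded_submodule I"
    and h1: "deg_part 2 I' \<subseteq> qperp2 \<iota>' q"
    and h2: "free_quotient_deg 2 I"
    and h3: "pmap \<pi> ` deg_part 2 I = deg_part 2 I'"
  shows "\<exists>g::'a^'n^'n. invertible g \<and> (\<forall>i j. \<pi> (g $ i $ j - mat 1 $ i $ j) = 0) \<and>
           deg_part 2 (subst g ` I) \<subseteq> qperp2 \<iota> q"
proof -
  have \<iota>: "ring_hom \<iota>"
    using A by (simp add: finite_local_algebra_def finite_algebra_def)
  have q2: "homog 2 q"
    using q by (simp add: full_rank_quadric_def)
  obtain H' where "H' ** contraction_matrix id q = mat 1"
    using q by (auto simp: full_rank_quadric_def hessian_eq_contraction_matrix[OF q2] invertible_def)
  then have "map_matrix \<iota> (H' ** contraction_matrix id q) = mat 1"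
    by (simp add: \<iota> map_matrix_mat)
  then have Hi: "map_matrix \<iota> H' ** contraction_matrix \<iota> q = mat 1"
    by (simp add: \<iota> map_matrix_mult contraction_matrix_eq_map_matrix)
  have half: "\<iota> (1/2) + \<iota> (1/2) = 1"
    using ring_hom_add[OF \<iota>, of "1/2" "1/2"] ring_hom_one[OF \<iota>] by simp
  have vanish: "\<pi> (contraction \<iota> q f) = 0" if "f \<in> deg_part 2 I" for f
  proof -
    have "pmap \<pi> f \<in> qperp2 \<iota>' q"
      using h1 h3 that by blast
    moreover have "\<pi> (contraction \<iota> q f) = contraction \<iota>' q (pmap \<pi> f)"
      using hom compat by (intro ring_hom_contraction) auto
    ultimately show ?thesis
      using q2 by (simp add: qperp2_iff)
  qed
  show ?thesis
    using exists_unipotent_subst_into_qperp2[OF q2 Igr h2 Hi half hom J2 vanish] .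
qed

end
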